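(* Finding the minimum of a sequence of $n$ distinct elements has deterministic fragile complexity $\Theta(\log(\mathrm{Inv}))$. That is: there is a deterministic comparison-based algorithm that finds the minimum such that every element participates in $O(\log(\mathrm{Inv}))$ comparisons, where $\mathrm{Inv}$ is the number of inversions of the input; and for every $k$ there are inputs with $\mathrm{Inv}\le k$ on which any deterministic comparison-based algorithm forces some element to participate in $\Omega(\log k)$ comparisons.
   Context: An inversion of a sequence $a_1,\dots,a_n$ is a pair of indices $i<j$ with $a_i>a_j$; $\mathrm{Inv}$ is the total number of inversions in the input. The fragile complexity of a comparison-based algorithm is the maximum, over input elements, of the number of comparisons in which the element participates; the fragile complexity of a problem is the best possible fragile complexity of any algorithm solving it. Logarithms of a parameter $r$ are understood as $\log\max(r,2)$ so that bounds are at least constant. *)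

theory Defs
  imports Complex_Main
begin

text \<open>A deterministic comparison-based algorithm on inputs of a fixed size n is modelled
  as a binary decision tree. Inputs are lists of distinct natural numbers (only the
  relative order matters for a comparison-based algorithm).\<close>

datatype ctree = Leaf nat | Cmp nat nat ctree ctree

fun run :: "nat list \<Rightarrow> ctree \<Rightarrow> nat" where
  "run xs (Leaf r) = r"
| "run xs (Cmp i j l r) = (if xs ! i < xs ! j then run xs l else run xs r)"

fun cmps :: "nat list \<Rightarrow> ctree \<Rightarrow> (nat \<times> nat) list" where
  "cmps xs (Leaf r) = []"
| "cmps xs (Cmp i j l r) = (i, j) # (if xs ! i < xs ! j then cmps xs l else cmps xs r)"

definition participations :: "nat list \<Rightarrow> ctree \<Rightarrow> nat \<Rightarrow> nat" where
  "participations xs t e = length (filter (\<lambda>(i, j). i = e \<or> j = e) (cmps xs t))"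

fun wf_tree :: "nat \<Rightarrow> ctree \<Rightarrow> bool" where
  "wf_tree n (Leaf r) = (r < n)"
| "wf_tree n (Cmp i j l r) = (i < n \<and> j < n \<and> wf_tree n l \<and> wf_tree n r)"

definition finds_min :: "nat \<Rightarrow> ctree \<Rightarrow> bool" where
  "finds_min n t \<longleftrightarrow> wf_tree n t \<and>
     (\<forall>xs. length xs = n \<and> distinct xs \<longrightarrow> xs ! run xs t = Min (set xs))"

definition inversions :: "nat list \<Rightarrow> nat" where
  "inversions xs = card {(i, j). i < j \<and> j < length xs \<and> xs ! i > xs ! j}"

definition logm :: "real \<Rightarrow> real" where
  "logm r = log 2 (max r 2)"

end

theory Submission
  imports Defs "HOL-Library.Discrete_Functions"
begin

text \<open>
  Upper bound: first compare every adjacent pair. The minimum sits at position 0 or at a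
  descent j (an index with x_j < x_(j-1)), and every descent is an inversion, so at most
  Inv + 1 candidates remain. A balanced tournament among them involves each element in at
  most log (Inv + 1) + 1 further comparisons, and the scan involves it in at most two.

  Lower bound: an adversary gives every element weight 1. When two live candidates meet,
  the lighter one loses, hands its weight to the winner and is frozen at a value above all
  remaining candidates, so that comparisons with frozen elements reveal nothing. A
  candidate's weight thus at most doubles per comparison, and a correct algorithm may only
  stop once a single candidate carries the total weight n; that candidate took part in at
  least log n comparisons. Inputs of length n = floor (sqrt k) have at most k inversions.
\<close>

fun ctree_bind :: "ctree \<Rightarrow> (nat \<Rightarrow> ctree) \<Rightarrow> ctree" where
  "ctree_bind (Leaf r) f = f r"
| "ctree_bind (Cmp i j l r) f = Cmp i j (ctree_bind l f) (ctree_bind r f)"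

lemma run_ctree_bind [simp]: "run xs (ctree_bind t f) = run xs (f (run xs t))"
  by (induction t) auto

lemma cmps_ctree_bind [simp]: "cmps xs (ctree_bind t f) = cmps xs t @ cmps xs (f (run xs t))"
  by (induction t) auto

lemma wf_tree_ctree_bind:
  "wf_tree n t \<Longrightarrow> (\<And>r. r < n \<Longrightarrow> wf_tree n (f r)) \<Longrightarrow> wf_tree n (ctree_bind t f)"
  by (induction t) auto

lemma participations_Leaf [simp]: "participations xs (Leaf r) e = 0"
  by (simp add: participations_def)

lemma participations_Cmp [simp]:
  "participations xs (Cmp i j l r) e =
     (if i = e \<or> j = e then 1 else 0) + participations xs (if xs ! i < xs ! j then l else r) e"
  by (simp add: participations_def)

lemma participations_ctree_bind [simp]:
  "participations xs (ctree_bind t f) e = participations xs t e + participations xs (f (run xs t)) e"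
  by (simp add: participations_def)

section \<open>Tournaments\<close>

function tournament :: "nat list \<Rightarrow> ctree" where
  "tournament [] = Leaf 0"
| "tournament [a] = Leaf a"
| "tournament (a # b # rest) =
     (let L = a # b # rest; h = length L div 2 in
      ctree_bind (tournament (take h L))
        (\<lambda>x. ctree_bind (tournament (drop h L)) (\<lambda>y. Cmp x y (Leaf x) (Leaf y))))"
  by pat_completeness auto
termination by (relation "measure length") (auto simp: Let_def)

lemma tournament_halves:
  assumes "2 \<le> length L"
  shows "tournament L = ctree_bind (tournament (take (length L div 2) L))
           (\<lambda>x. ctree_bind (tournament (drop (length L div 2) L)) (\<lambda>y. Cmp x y (Leaf x) (Leaf y)))"
  using assms by (cases L rule: tournament.cases) (auto simp: Let_def)

lemma tournament_induct [case_names short halves]: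
  assumes "\<And>L. length L < 2 \<Longrightarrow> P L"
    and "\<And>L. 2 \<le> length L \<Longrightarrow> P (take (length L div 2) L) \<Longrightarrow> P (drop (length L div 2) L) \<Longrightarrow> P L"
  shows "P L"
proof (induction L rule: length_induct)
  case (1 L)
  then show ?case using assms by (cases "2 \<le> length L") auto
qed

lemma run_tournament_halves:
  assumes "2 \<le> length L"
  shows "run xs (tournament L) =
           (let x = run xs (tournament (take (length L div 2) L));
                y = run xs (tournament (drop (length L div 2) L))
            in if xs ! x < xs ! y then x else y)"
  by (simp add: tournament_halves[OF assms] Let_def)

lemma set_halves:
  "set L = set (take (length L div 2) L) \<union> set (drop (length L div 2) L)"
  by (metis append_take_drop_id set_append)

lemma run_tournament_mem: "L \<noteq> [] \<Longrightarrow> run xs (tournament L) \<in> set L"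
proof (induction L rule: tournament_induct)
  case (short L)
  then obtain a where "L = [a]" by (cases L rule: tournament.cases) auto
  then show ?case by simp
next
  case (halves L)
  then have "run xs (tournament (take (length L div 2) L)) \<in> set L"
    "run xs (tournament (drop (length L div 2) L)) \<in> set L"
    using set_halves[of L] by auto
  then show ?case
    unfolding run_tournament_halves[OF halves.hyps] Let_def by simp
qed

lemma run_tournament_le: "a \<in> set L \<Longrightarrow> xs ! run xs (tournament L) \<le> xs ! a"
proof (induction L rule: tournament_induct)
  case (short L)
  then obtain b where "L = [b]" by (cases L rule: tournament.cases) auto
  then show ?case using short by simp
next
  case (halves L)
  have "xs ! run xs (tournament (take (length L div 2) L)) \<le> xs ! a \<or>
        xs ! run xs (tournament (drop (length L div 2) L)) \<le> xs ! a"
    using halves set_halves[of L] by blast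
  then show ?case
    unfolding run_tournament_halves[OF halves.hyps] Let_def by auto
qed

lemma cmps_tournament_subset: "set (cmps xs (tournament L)) \<subseteq> set L \<times> set L"
proof (induction L rule: tournament_induct)
  case (short L)
  then show ?case by (cases L rule: tournament.cases) auto
next
  case (halves L)
  let ?A = "take (length L div 2) L" and ?B = "drop (length L div 2) L"
  have "?A \<noteq> []" "?B \<noteq> []"
    using halves.hyps by auto
  then have "run xs (tournament ?A) \<in> set L" "run xs (tournament ?B) \<in> set L"
    using run_tournament_mem set_halves[of L] by blast+
  moreover have "set ?A \<subseteq> set L" "set ?B \<subseteq> set L"
    using set_halves[of L] by blast+
  ultimately show ?case
    using halves.IH unfolding tournament_halves[OF halves.hyps] by auto
qed

lemma participations_tournament_not_mem:
  "e \<notin> set L \<Longrightarrow> participations xs (tournament L) e = 0"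
  using cmps_tournament_subset[of xs L]
  by (fastforce simp: participations_def filter_empty_conv)

lemma participations_tournament_le:
  "distinct L \<Longrightarrow> length L \<le> 2 ^ d \<Longrightarrow> participations xs (tournament L) e \<le> d"
proof (induction L arbitrary: d rule: tournament_induct)
  case (short L)
  then show ?case by (cases L rule: tournament.cases) auto
next
  case (halves L)
  let ?A = "take (length L div 2) L" and ?B = "drop (length L div 2) L"
  obtain d' where d: "d = Suc d'"
    using halves.hyps halves.prems(2) by (cases d) auto
  have "length L \<le> 2 * 2 ^ d'"
    using halves.prems(2) unfolding d by simp
  then have "length ?A \<le> 2 ^ d'" "length ?B \<le> 2 ^ d'"
    by simp_all
  then have "participations xs (tournament ?A) e \<le> d'" "participations xs (tournament ?B) e \<le> d'"
    using halves.IH halves.prems(1) by simp_all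
  moreover have "participations xs (tournament ?A) e = 0 \<or> participations xs (tournament ?B) e = 0"
  proof -
    have "e \<notin> set ?A \<or> e \<notin> set ?B"
      using set_take_disj_set_drop_if_distinct[OF halves.prems(1)] by blast
    then show ?thesis
      using participations_tournament_not_mem by metis
  qed
  moreover have "participations xs (tournament L) e \<le>
      participations xs (tournament ?A) e + participations xs (tournament ?B) e + 1"
    unfolding tournament_halves[OF halves.hyps] by simp
  ultimately show ?case
    unfolding d by linarith
qed

lemma wf_tree_tournament: "L \<noteq> [] \<Longrightarrow> set L \<subseteq> {..<n} \<Longrightarrow> wf_tree n (tournament L)"
proof (induction L rule: tournament_induct)
  case (short L)
  then obtain a where "L = [a]" by (cases L rule: tournament.cases) auto
  then show ?case using short.prems by simp
next
  case (halves L)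
  have wf_halves: "wf_tree n (tournament (take (length L div 2) L))"
    "wf_tree n (tournament (drop (length L div 2) L))"
    using halves set_halves[of L] by auto
  then show ?case
    unfolding tournament_halves[OF halves.hyps]
    by (intro wf_tree_ctree_bind) simp_all
qed

section \<open>The upper bound: scanning for descents\<close>

text \<open>Non-strict, to match the branch taken by descent_scan; on distinct inputs these are
  exactly the descents.\<close>
definition descents :: "nat list \<Rightarrow> nat \<Rightarrow> nat \<Rightarrow> nat list" where
  "descents xs i n = filter (\<lambda>j. xs ! j \<le> xs ! (j - 1)) [Suc i..<n]"

function descent_scan :: "nat \<Rightarrow> nat \<Rightarrow> nat list \<Rightarrow> ctree" where
  "descent_scan n i cs =
     (if Suc i < n
      then Cmp i (Suc i) (descent_scan n (Suc i) cs) (descent_scan n (Suc i) (cs @ [Suc i]))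
      else tournament cs)"
  by auto
termination by (relation "measure (\<lambda>(n, i, cs). n - i)") auto

declare descent_scan.simps [simp del]

lemma descents_step:
  assumes "Suc i < n"
  shows "descents xs i n =
           (if xs ! i < xs ! Suc i then descents xs (Suc i) n else Suc i # descents xs (Suc i) n)"
proof -
  have "[Suc i..<n] = Suc i # [Suc (Suc i)..<n]"
    using assms by (simp add: upt_conv_Cons)
  then show ?thesis by (simp add: descents_def)
qed

lemma run_descent_scan:
  "run xs (descent_scan n i cs) = run xs (tournament (cs @ descents xs i n))"
proof (induction n i cs rule: descent_scan.induct)
  case (1 n i cs)
  then show ?case
    by (cases "Suc i < n")
      (simp_all add: descent_scan.simps[of n i cs] descents_step, simp add: descents_def)
qed

lemma participations_descent_scan:
  "participations xs (descent_scan n i cs) e =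
     length (filter (\<lambda>j. j = e \<or> Suc j = e) [i..<n - 1]) +
     participations xs (tournament (cs @ descents xs i n)) e"
proof (induction n i cs rule: descent_scan.induct)
  case (1 n i cs)
  let ?P = "\<lambda>j. j = e \<or> Suc j = e" and ?c = "if i = e \<or> Suc i = e then 1 else 0"
  show ?case
  proof (cases "Suc i < n")
    case True
    have scan: "descent_scan n i cs =
        Cmp i (Suc i) (descent_scan n (Suc i) cs) (descent_scan n (Suc i) (cs @ [Suc i]))"
      using True by (simp add: descent_scan.simps[of n i cs])
    have "[i..<n - 1] = i # [Suc i..<n - 1]"
      using True by (simp add: upt_conv_Cons)
    then have count: "length (filter ?P [i..<n - 1]) = ?c + length (filter ?P [Suc i..<n - 1])"
      by simp
    show ?thesis
    proof (cases "xs ! i < xs ! Suc i")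
      case ascent: True
      have "participations xs (descent_scan n i cs) e =
          ?c + participations xs (descent_scan n (Suc i) cs) e"
        unfolding scan using ascent by simp
      also have "\<dots> = ?c + length (filter ?P [Suc i..<n - 1]) +
          participations xs (tournament (cs @ descents xs (Suc i) n)) e"
        using "1.IH"(1) True by simp
      finally show ?thesis
        using count ascent descents_step[OF True, of xs] by simp
    next
      case descent: False
      have "participations xs (descent_scan n i cs) e =
          ?c + participations xs (descent_scan n (Suc i) (cs @ [Suc i])) e"
        unfolding scan using descent by simp
      also have "\<dots> = ?c + length (filter ?P [Suc i..<n - 1]) +
          participations xs (tournament ((cs @ [Suc i]) @ descents xs (Suc i) n)) e"
        using "1.IH"(2) True by simp
      finally show ?thesis
        using count descent descents_step[OF True, of xs] by simp
    qed
  next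
    case False
    then show ?thesis by (simp add: descent_scan.simps[of n i cs] descents_def)
  qed
qed

lemma wf_tree_descent_scan:
  "cs \<noteq> [] \<Longrightarrow> set cs \<subseteq> {..<n} \<Longrightarrow> wf_tree n (descent_scan n i cs)"
proof (induction n i cs rule: descent_scan.induct)
  case (1 n i cs)
  then show ?case
    by (cases "Suc i < n") (simp_all add: descent_scan.simps[of n i cs] wf_tree_tournament)
qed

definition min_finder :: "nat \<Rightarrow> ctree" where
  "min_finder n = descent_scan n 0 [0]"

lemma min_index_mem_descents:
  assumes "m < length xs" "xs ! m = Min (set xs)"
  shows "m \<in> set (0 # descents xs 0 (length xs))"
proof (cases m)
  case (Suc k)
  have "xs ! m \<le> xs ! k"
    using assms Suc by simp
  then show ?thesis
    using assms(1) Suc by (simp add: descents_def)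
qed simp

lemma finds_min_min_finder:
  assumes "1 \<le> n"
  shows "finds_min n (min_finder n)"
  unfolding finds_min_def
proof (intro conjI allI impI)
  have "set (descents xs 0 n) \<subseteq> {..<n}" for xs
    by (auto simp: descents_def)
  then show "wf_tree n (min_finder n)"
    unfolding min_finder_def using assms by (intro wf_tree_descent_scan) auto
  fix xs :: "nat list"
  assume xs: "length xs = n \<and> distinct xs"
  let ?r = "run xs (min_finder n)"
  obtain m where m: "m < n" "xs ! m = Min (set xs)"
    using xs assms Min_in[of "set xs"] by (fastforce simp: in_set_conv_nth)
  have r: "?r = run xs (tournament (0 # descents xs 0 n))"
    unfolding min_finder_def run_descent_scan by simp
  have "?r < n"
    unfolding r using run_tournament_mem[of "0 # descents xs 0 n" xs] assms
    by (auto simp: descents_def)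
  moreover have "xs ! ?r \<le> Min (set xs)"
    unfolding r using run_tournament_le min_index_mem_descents m xs by metis
  ultimately show "xs ! ?r = Min (set xs)"
    using xs by (simp add: antisym)
qed

lemma length_filter_adjacent_le: "length (filter (\<lambda>j. j = e \<or> Suc j = e) [i..<m]) \<le> 2"
proof -
  have "length (filter (\<lambda>j. j = e \<or> Suc j = e) [i..<m]) =
      card (set (filter (\<lambda>j. j = e \<or> Suc j = e) [i..<m]))"
    by (rule distinct_card[symmetric]) simp
  also have "\<dots> \<le> card {e, e - 1}"
    by (rule card_mono) auto
  also have "\<dots> \<le> 2"
    by (simp add: card_insert_if)
  finally show ?thesis .
qed

lemma length_descents_le_inversions:
  assumes "distinct xs"
  shows "length (descents xs 0 (length xs)) \<le> inversions xs"
proof -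
  let ?D = "set (descents xs 0 (length xs))"
  have "length (descents xs 0 (length xs)) = card ?D"
    by (rule distinct_card[symmetric]) (simp add: descents_def)
  also have "\<dots> = card ((\<lambda>j. (j - 1, j)) ` ?D)"
    by (rule card_image[symmetric]) (simp add: inj_on_def)
  also have "\<dots> \<le> card {(i, j). i < j \<and> j < length xs \<and> xs ! i > xs ! j}"
  proof (rule card_mono)
    show "finite {(i, j). i < j \<and> j < length xs \<and> xs ! i > xs ! j}"
      by (rule finite_subset[of _ "{..<length xs} \<times> {..<length xs}"]) auto
    have "xs ! j < xs ! (j - 1)" if "j \<in> ?D" for j
    proof -
      have j: "1 \<le> j" "j < length xs" "xs ! j \<le> xs ! (j - 1)"
        using that by (auto simp: descents_def)
      moreover have "xs ! j \<noteq> xs ! (j - 1)"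
        using j assms by (simp add: nth_eq_iff_index_eq)
      ultimately show ?thesis by simp
    qed
    then show "(\<lambda>j. (j - 1, j)) ` ?D \<subseteq> {(i, j). i < j \<and> j < length xs \<and> xs ! i > xs ! j}"
      by (auto simp: descents_def)
  qed
  finally show ?thesis
    unfolding inversions_def .
qed

lemma one_le_logm: "1 \<le> logm r"
  by (simp add: logm_def)

lemma floor_log_le_logm:
  assumes "m \<le> k + 1"
  shows "real (floor_log m) \<le> 1 + logm (real k)"
proof (cases "m = 0")
  case False
  have "(2::real) ^ floor_log m \<le> real m"
    using floor_log_exp2_le[of m] False by (simp flip: of_nat_le_iff)
  also have "\<dots> \<le> 2 * max (real k) 2"
    using assms by simp
  finally have "log 2 (2 ^ floor_log m) \<le> log 2 (2 * max (real k) 2)"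
    by (intro log_mono) simp_all
  also have "\<dots> = 1 + logm (real k)"
    by (simp add: logm_def log_mult max_def)
  finally show ?thesis
    by simp
qed (use one_le_logm[of "real k"] in simp)

lemma participations_min_finder_le:
  assumes "distinct xs"
  shows "real (participations xs (min_finder (length xs)) e) \<le> 5 * logm (real (inversions xs))"
proof -
  let ?C = "0 # descents xs 0 (length xs)"
  have "length ?C \<le> 2 ^ Suc (floor_log (length ?C))"
    using floor_log_exp2_gt[of "length ?C"] by simp
  then have "participations xs (tournament ?C) e \<le> Suc (floor_log (length ?C))"
    by (intro participations_tournament_le) (simp add: descents_def)
  then have "participations xs (min_finder (length xs)) e \<le> 3 + floor_log (length ?C)"
    unfolding min_finder_def participations_descent_scan
    using length_filter_adjacent_le[of e 0 "length xs - 1"] by simp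
  moreover have "real (floor_log (length ?C)) \<le> 1 + logm (real (inversions xs))"
    using length_descents_le_inversions[OF assms] by (intro floor_log_le_logm) simp
  ultimately show ?thesis
    using one_le_logm[of "real (inversions xs)"] by linarith
qed

section \<open>The lower bound: a weight-merging adversary\<close>

text \<open>Element i is still a candidate for the minimum iff w i > 0. Eliminated elements are
  pinned to pairwise distinct values v i \<ge> T, candidates take values below T, and the
  consistent lists are the inputs compatible with this state.\<close>
definition alive :: "nat \<Rightarrow> (nat \<Rightarrow> nat) \<Rightarrow> nat set" where
  "alive n w = {i. i < n \<and> 0 < w i}"

definition adversary_state :: "nat \<Rightarrow> (nat \<Rightarrow> nat) \<Rightarrow> (nat \<Rightarrow> nat) \<Rightarrow> nat \<Rightarrow> bool" where
  "adversary_state n w v T \<longleftrightarrow> 1 \<le> card (alive n w) \<and> card (alive n w) \<le> T \<and>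
     (\<forall>i<n. w i = 0 \<longrightarrow> T \<le> v i) \<and> inj_on v {i. i < n \<and> w i = 0}"

definition consistent :: "nat \<Rightarrow> (nat \<Rightarrow> nat) \<Rightarrow> (nat \<Rightarrow> nat) \<Rightarrow> nat \<Rightarrow> nat list \<Rightarrow> bool" where
  "consistent n w v T xs \<longleftrightarrow> length xs = n \<and> distinct xs \<and>
     (\<forall>i<n. w i = 0 \<longrightarrow> xs ! i = v i) \<and> (\<forall>i<n. 0 < w i \<longrightarrow> xs ! i < T)"

lemma finite_alive [simp]: "finite (alive n w)"
  by (simp add: alive_def)

lemma consistent_exists:
  assumes st: "adversary_state n w v T" and a: "a \<in> alive n w"
  shows "\<exists>xs. consistent n w v T xs \<and> xs ! a = 0"
proof -
  let ?S = "alive n w" and ?D = "{i. i < n \<and> w i = 0}"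
  obtain h where h: "bij_betw h (?S - {a}) {0..<card (?S - {a})}"
    using ex_bij_betw_finite_nat[of "?S - {a}"] by auto
  define f where "f i = (if i = a then 0 else if 0 < w i then Suc (h i) else v i)" for i
  have card_S: "1 \<le> card ?S" "card ?S \<le> T"
    using st by (auto simp: adversary_state_def)
  have f_S: "f i = (if i = a then 0 else Suc (h i))" if "i \<in> ?S" for i
    using that by (simp add: f_def alive_def)
  have inj_S: "inj_on f ?S"
  proof (rule inj_onI)
    fix i j assume ij: "i \<in> ?S" "j \<in> ?S" "f i = f j"
    show "i = j"
    proof (cases "i = a \<or> j = a")
      case True
      then show ?thesis using ij f_S by (metis nat.distinct(1))
    next
      case False
      then have "h i = h j"
        using ij f_S by simp
      then show ?thesis
        using h ij False unfolding bij_betw_def inj_on_def by blast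
    qed
  qed
  have img_S: "f ` ?S \<subseteq> {..<T}"
  proof
    fix y assume "y \<in> f ` ?S"
    then obtain i where i: "i \<in> ?S" "y = f i" by blast
    have "h i < card ?S - 1" if "i \<noteq> a"
      using h i that a by (auto simp: bij_betw_def)
    then show "y \<in> {..<T}"
      using i card_S by (auto simp: f_def alive_def)
  qed
  have f_D: "f i = v i" if "i \<in> ?D" for i
    using that a by (auto simp: f_def alive_def)
  have inj_D: "inj_on f ?D"
    using st f_D by (auto simp: adversary_state_def intro: inj_on_cong[THEN iffD2])
  have img_D: "f ` ?D \<subseteq> {T..}"
    using st f_D by (auto simp: adversary_state_def)
  have "{0..<n} = ?S \<union> ?D"
    by (auto simp: alive_def)
  moreover have "f ` ?S \<inter> f ` ?D = {}"
    using img_S img_D by fastforce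
  ultimately have "inj_on f {0..<n}"
    using inj_S inj_D by (simp add: inj_on_Un) blast
  then have "consistent n w v T (map f [0..<n])"
    using img_S f_D by (auto simp: consistent_def distinct_map alive_def)
  moreover have "map f [0..<n] ! a = 0"
    using a by (simp add: f_def alive_def)
  ultimately show ?thesis by blast
qed

lemma sum_merge:
  fixes w :: "nat \<Rightarrow> nat"
  assumes "a < n" "b < n" "a \<noteq> b"
  shows "(\<Sum>k<n. (w(a := w a + w b, b := 0)) k) = (\<Sum>k<n. w k)"
proof -
  let ?R = "{..<n} - {a} - {b}"
  have split: "(\<Sum>k<n. f k) = f a + f b + sum f ?R" for f :: "nat \<Rightarrow> nat"
    using assms sum.remove[of "{..<n}" a f] sum.remove[of "{..<n} - {a}" b f] by simp
  have "sum (w(a := w a + w b, b := 0)) ?R = sum w ?R"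
    by (rule sum.cong) auto
  then show ?thesis
    using split[of "w(a := w a + w b, b := 0)"] split[of w] assms by simp
qed

lemma adversary_state_merge:
  assumes st: "adversary_state n w v T"
    and ab: "a < n" "b < n" "a \<noteq> b" "0 < w a" "0 < w b"
  shows "adversary_state n (w(a := w a + w b, b := 0)) (v(b := T - 1)) (T - 1)"
proof -
  let ?w = "w(a := w a + w b, b := 0)" and ?v = "v(b := T - 1)"
  have alive: "alive n ?w = alive n w - {b}"
    using ab by (auto simp: alive_def)
  have "card {a, b} \<le> card (alive n w)"
    using ab by (intro card_mono) (auto simp: alive_def)
  then have two: "2 \<le> card (alive n w)"
    using ab by simp
  have card: "card (alive n ?w) = card (alive n w) - 1"
    unfolding alive using ab by (simp add: alive_def)
  have dead: "{i. i < n \<and> ?w i = 0} = insert b {i. i < n \<and> w i = 0}"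
    using ab by auto
  have "T - 1 \<le> ?v i" if "i < n" "?w i = 0" for i
    using st that ab by (cases "i = b") (auto simp: adversary_state_def split: if_splits)
  moreover have "inj_on ?v (insert b {i. i < n \<and> w i = 0})"
  proof -
    have "?v b \<notin> ?v ` {i. i < n \<and> w i = 0}"
      using st two ab by (auto simp: adversary_state_def)
    moreover have "inj_on ?v {i. i < n \<and> w i = 0}"
    proof -
      have "inj_on v {i. i < n \<and> w i = 0}"
        using st by (simp add: adversary_state_def)
      moreover have "?v i = v i" if "i \<in> {i. i < n \<and> w i = 0}" for i
        using that ab by auto
      ultimately show ?thesis
        using inj_on_cong by blast
    qed
    moreover have "{i. i < n \<and> w i = 0} - {b} = {i. i < n \<and> w i = 0}"
      using ab by auto
    ultimately show ?thesis
      by (simp add: inj_on_insert)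
  qed
  ultimately show ?thesis
    using st two card unfolding adversary_state_def dead by auto
qed

lemma consistent_merge:
  assumes ab: "a < n" "b < n" "a \<noteq> b" "0 < w a" "0 < w b" "0 < T"
    and xs: "consistent n (w(a := w a + w b, b := 0)) (v(b := T - 1)) (T - 1) xs"
  shows "consistent n w v T xs \<and> xs ! a < xs ! b"
proof -
  have b: "xs ! b = T - 1" and a: "xs ! a < T - 1"
    using xs ab by (auto simp: consistent_def)
  have "xs ! i = v i" if "i < n" "w i = 0" for i
  proof -
    have "i \<noteq> a" "i \<noteq> b"
      using that ab by auto
    then show ?thesis
      using xs that by (auto simp: consistent_def)
  qed
  moreover have "xs ! i < T" if "i < n" "0 < w i" for i
  proof (cases "i = b")
    case False
    then have "0 < (w(a := w a + w b, b := 0)) i"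
      using that ab by simp
    then show ?thesis
      using xs that by (auto simp: consistent_def)
  qed (use b ab in simp)
  ultimately show ?thesis
    using xs a b by (auto simp: consistent_def)
qed

lemma alive_eq_output:
  assumes st: "adversary_state n w v T" and r: "r < n"
    and correct: "\<And>xs. consistent n w v T xs \<Longrightarrow> xs ! r = Min (set xs)"
  shows "alive n w = {r}"
proof -
  have "a = r" if a: "a \<in> alive n w" for a
  proof -
    obtain xs where xs: "consistent n w v T xs" "xs ! a = 0"
      using consistent_exists[OF st a] by blast
    have an: "a < n"
      using a by (simp add: alive_def)
    then have "xs ! r \<le> xs ! a"
      using correct[OF xs(1)] xs(1) by (simp add: consistent_def)
    then have "xs ! r = xs ! a"
      using xs(2) by simp
    then show "a = r"
      using xs(1) an r by (simp add: consistent_def nth_eq_iff_index_eq)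
  qed
  moreover have "alive n w \<noteq> {}"
    using st by (auto simp: adversary_state_def)
  ultimately show ?thesis by blast
qed

definition forced_participation ::
    "nat \<Rightarrow> (nat \<Rightarrow> nat) \<Rightarrow> (nat \<Rightarrow> nat) \<Rightarrow> nat \<Rightarrow> ctree \<Rightarrow> bool" where
  "forced_participation n w v T t \<longleftrightarrow> (\<exists>xs e. consistent n w v T xs \<and> e < n \<and> 0 < w e \<and>
     (\<Sum>k<n. w k) \<le> 2 ^ participations xs t e * w e)"

lemma forced_participation_Cmp:
  assumes refine: "\<And>xs. consistent n w' v' T' xs \<Longrightarrow> consistent n w v T xs \<and> (xs ! i < xs ! j) = b"
    and sum_eq: "(\<Sum>k<n. w' k) = (\<Sum>k<n. w k)"
    and weight: "\<And>e. e < n \<Longrightarrow> 0 < w' e \<Longrightarrow> 0 < w e \<and> w' e \<le> (if i = e \<or> j = e then 2 else 1) * w e"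
    and forced: "forced_participation n w' v' T' (if b then l else r)"
  shows "forced_participation n w v T (Cmp i j l r)"
proof -
  obtain xs e where xs: "consistent n w' v' T' xs" and e: "e < n" "0 < w' e"
    and bound: "(\<Sum>k<n. w' k) \<le> 2 ^ participations xs (if b then l else r) e * w' e"
    using forced by (auto simp: forced_participation_def)
  let ?p = "participations xs (if b then l else r) e" and ?c = "if i = e \<or> j = e then 1 else 0"
  have cons: "consistent n w v T xs" and outcome: "(xs ! i < xs ! j) = b"
    using refine[OF xs] by auto
  have "(\<Sum>k<n. w k) \<le> 2 ^ ?p * w' e"
    using bound sum_eq by simp
  also have "\<dots> \<le> 2 ^ ?p * (2 ^ ?c * w e)"
    using weight[OF e] by (cases "i = e \<or> j = e") simp_all
  also have "\<dots> = 2 ^ participations xs (Cmp i j l r) e * w e"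
    using outcome by (simp add: power_add)
  finally show ?thesis
    using cons e weight[OF e] unfolding forced_participation_def by blast
qed

lemma forced_participation_Cmp_merge:
  assumes st: "adversary_state n w v T"
    and pair: "{i, j} = {a, b}" "a < n" "b < n" "a \<noteq> b" "0 < w b" "w b \<le> w a"
    and IH: "\<And>w' v' T' c. adversary_state n w' v' T' \<Longrightarrow>
      (\<And>xs. consistent n w' v' T' xs \<Longrightarrow> consistent n w v T xs \<and> (xs ! i < xs ! j) = c) \<Longrightarrow>
      forced_participation n w' v' T' (if c then l else r)"
  shows "forced_participation n w v T (Cmp i j l r)"
proof -
  let ?w = "w(a := w a + w b, b := 0)" and ?v = "v(b := T - 1)"
  have wa: "0 < w a"
    using pair by simp
  have T_pos: "0 < T"
    using st by (auto simp: adversary_state_def)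
  have refine: "consistent n w v T xs \<and> (xs ! i < xs ! j) = (a = i)"
    if "consistent n ?w ?v (T - 1) xs" for xs
  proof -
    have "consistent n w v T xs" "xs ! a < xs ! b"
      using consistent_merge[OF pair(2-4) wa pair(5) T_pos that] by auto
    then show ?thesis
      using pair(1,4) by (auto simp: doubleton_eq_iff)
  qed
  show ?thesis
  proof (rule forced_participation_Cmp[OF refine])
    show "(\<Sum>k<n. ?w k) = (\<Sum>k<n. w k)"
      using sum_merge[OF pair(2-4)] .
    show "0 < w e \<and> ?w e \<le> (if i = e \<or> j = e then 2 else 1) * w e"
      if "e < n" "0 < ?w e" for e
      using that pair by (auto simp: doubleton_eq_iff)
    show "forced_participation n ?w ?v (T - 1) (if a = i then l else r)"
      using IH[OF adversary_state_merge[OF st pair(2-4) wa pair(5)] refine] .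
  qed
qed

lemma sum_eq_sum_alive: "(\<Sum>k<n. w k) = sum w (alive n w)"
  by (rule sum.mono_neutral_right) (auto simp: alive_def)

lemma forced_participation_if_correct:
  assumes "wf_tree n t" "adversary_state n w v T"
    and "\<And>xs. consistent n w v T xs \<Longrightarrow> xs ! run xs t = Min (set xs)"
  shows "forced_participation n w v T t"
  using assms
proof (induction t arbitrary: w v T)
  case (Leaf r)
  then have r: "r < n" and alive: "alive n w = {r}"
    using alive_eq_output by auto
  obtain xs where "consistent n w v T xs"
    using consistent_exists[OF Leaf.prems(2), of r] alive by auto
  moreover have "(\<Sum>k<n. w k) = w r"
    using alive by (simp add: sum_eq_sum_alive)
  ultimately show ?case
    using r alive unfolding forced_participation_def by (auto simp: alive_def)
next
  case (Cmp i j l r)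
  have ij: "i < n" "j < n" and st: "adversary_state n w v T"
    using Cmp.prems(1,2) by auto
  have sub: "forced_participation n w' v' T' (if c then l else r)"
    if st': "adversary_state n w' v' T'"
      and refine: "\<And>xs. consistent n w' v' T' xs \<Longrightarrow> consistent n w v T xs \<and> (xs ! i < xs ! j) = c"
    for w' v' T' c
  proof -
    have "xs ! run xs (if c then l else r) = Min (set xs)" if "consistent n w' v' T' xs" for xs
      using Cmp.prems(3) refine[OF that] by fastforce
    then show ?thesis
      using Cmp.IH st' Cmp.prems(1) by (cases c) auto
  qed
  have fixed_outcome: "forced_participation n w v T (Cmp i j l r)"
    if "\<And>xs. consistent n w v T xs \<Longrightarrow> (xs ! i < xs ! j) = c" for c
    using that by (intro forced_participation_Cmp[where w' = w and v' = v and T' = T] sub[OF st]) auto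
  \<comment> \<open>only comparisons of two distinct live candidates change the adversary's state\<close>
  consider (same) "i = j" | (dead_dead) "w i = 0" "w j = 0" | (dead_alive) "w i = 0" "0 < w j"
    | (alive_dead) "0 < w i" "w j = 0" | (i_wins) "i \<noteq> j" "0 < w j" "w j \<le> w i"
    | (j_wins) "i \<noteq> j" "0 < w i" "w i \<le> w j"
    by (metis neq0_conv nat_le_linear)
  then show ?case
  proof cases
    case same
    then show ?thesis by (intro fixed_outcome[of False]) simp
  next
    case dead_dead
    then show ?thesis
      using ij by (intro fixed_outcome[of "v i < v j"]) (simp add: consistent_def)
  next
    case dead_alive
    have "T \<le> v i"
      using st ij dead_alive by (simp add: adversary_state_def)
    then show ?thesis
      using ij dead_alive by (intro fixed_outcome[of False]) (auto simp: consistent_def)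
  next
    case alive_dead
    have "T \<le> v j"
      using st ij alive_dead by (simp add: adversary_state_def)
    then show ?thesis
      using ij alive_dead by (intro fixed_outcome[of True]) (auto simp: consistent_def)
  next
    case i_wins
    then show ?thesis
      using forced_participation_Cmp_merge[OF st _ ij] sub by blast
  next
    case j_wins
    then show ?thesis
      using forced_participation_Cmp_merge[OF st insert_commute ij(2,1)] sub by blast
  qed
qed

lemma finds_min_participation_lower:
  assumes "1 \<le> n" "finds_min n t"
  shows "\<exists>xs e. length xs = n \<and> distinct xs \<and> e < n \<and> n \<le> 2 ^ participations xs t e"
proof -
  let ?w = "\<lambda>_. 1 :: nat" and ?v = "\<lambda>_. 0 :: nat"
  have "alive n ?w = {..<n}"
    by (auto simp: alive_def)
  then have "adversary_state n ?w ?v n"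
    using assms(1) by (simp add: adversary_state_def)
  moreover have "xs ! run xs t = Min (set xs)" if "consistent n ?w ?v n xs" for xs
    using assms(2) that by (simp add: finds_min_def consistent_def)
  ultimately have "forced_participation n ?w ?v n t"
    using assms(2) forced_participation_if_correct by (auto simp: finds_min_def)
  then show ?thesis
    by (auto simp: forced_participation_def consistent_def)
qed

lemma inversions_le_square: "inversions xs \<le> length xs * length xs"
proof -
  have "{(i, j). i < j \<and> j < length xs \<and> xs ! i > xs ! j} \<subseteq> {..<length xs} \<times> {..<length xs}"
    by auto
  from card_mono[OF _ this] show ?thesis
    unfolding inversions_def by (simp add: card_cartesian_product)
qed

lemma inversions_sorted:
  assumes "sorted xs"
  shows "inversions xs = 0"
proof -
  have "\<not> xs ! i > xs ! j" if "i < j" "j < length xs" for i j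
    using sorted_nth_mono[OF assms, of i j] that by simp
  then have "{(i, j). i < j \<and> j < length xs \<and> xs ! i > xs ! j} = {}"
    by blast
  then show ?thesis
    unfolding inversions_def by (simp only: card.empty)
qed

lemma finds_min_two_compares:
  assumes "finds_min 2 t"
  shows "\<exists>e<2. 1 \<le> participations [0, 1] t e"
proof (cases t)
  case (Leaf r)
  have "r < 2" "[0::nat, 1] ! r = 0" "[1::nat, 0] ! r = 0"
    using assms Leaf by (auto simp: finds_min_def)
  then show ?thesis
    by (simp add: less_2_cases_iff) (metis nth_Cons_0 nth_Cons_Suc zero_neq_one)
next
  case (Cmp i j l r)
  then show ?thesis
    using assms by (auto simp: finds_min_def)
qed

lemma logm_le_of_le_power:
  assumes "k \<le> 2 ^ m" "1 \<le> m"
  shows "logm (real k) \<le> m"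
proof -
  have "(2::real) \<le> 2 ^ m"
    using assms(2) by (metis power_one_right power_increasing one_le_numeral)
  moreover have "real k \<le> 2 ^ m"
    using assms(1) by (metis of_nat_le_iff of_nat_numeral of_nat_power)
  ultimately have "log 2 (max (real k) 2) \<le> log 2 (2 ^ m)"
    by (intro log_mono) auto
  then show ?thesis
    by (simp add: logm_def)
qed

lemma logm_le_of_floor_sqrt_le_power:
  assumes n: "4 \<le> floor_sqrt k" and p: "floor_sqrt k \<le> 2 ^ p"
  shows "logm (real k) \<le> 4 * p"
proof -
  let ?n = "floor_sqrt k"
  have "k < (?n + 1) * (?n + 1)"
    using Suc_floor_sqrt_power2_gt[of k] by (simp add: power2_eq_square)
  also have "\<dots> \<le> (?n * ?n) * (?n * ?n)"
    using n by (intro mult_mono) (auto intro: order.trans[OF _ mult_le_mono1[of 2 ?n ?n]])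
  also have "\<dots> \<le> (2 ^ p * 2 ^ p) * (2 ^ p * 2 ^ p)"
    using p by (intro mult_mono) simp_all
  also have "\<dots> = 2 ^ (4 * p)"
    by (simp flip: power_add)
  finally have "k \<le> 2 ^ (4 * p)"
    by simp
  moreover have "p \<noteq> 0"
    using n p by (intro notI) simp
  ultimately show ?thesis
    by (intro logm_le_of_le_power) auto
qed

lemma min_finding_participation_lower_bound:
  "\<exists>n \<ge> 1. \<forall>t. finds_min n t \<longrightarrow>
     (\<exists>xs. length xs = n \<and> distinct xs \<and> inversions xs \<le> k \<and>
        (\<exists>e < n. real (participations xs t e) \<ge> 1/4 * logm (real k)))"
proof (cases "k < 16")
  case True
  have "logm (real k) \<le> 4"
    using True logm_le_of_le_power[of k 4] by simp
  then have "\<exists>e<2. 1/4 * logm (real k) \<le> real (participations [0, 1] t e)"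
    if "finds_min 2 t" for t
    using finds_min_two_compares[OF that] by fastforce
  moreover have "inversions [0::nat, 1] = 0"
    by (simp add: inversions_sorted)
  ultimately show ?thesis
    by (intro exI[of _ 2]) (auto intro!: exI[of _ "[0, 1]"])
next
  case False
  let ?n = "floor_sqrt k"
  have n: "4 \<le> ?n"
    using False by (intro le_floor_sqrtI) simp
  have inversions_le: "inversions xs \<le> k" if "length xs = ?n" for xs
    using inversions_le_square[of xs] floor_sqrt_power2_le[of k] that
    by (simp add: power2_eq_square)
  have participations_ge: "1/4 * logm (real k) \<le> real (participations xs t e)"
    if "?n \<le> 2 ^ participations xs t e" for xs t e
    using logm_le_of_floor_sqrt_le_power[OF n that] by simp
  show ?thesis
  proof (intro exI[of _ ?n] conjI allI impI)
    fix t
    assume "finds_min ?n t"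
    then obtain xs e where "length xs = ?n" "distinct xs" "e < ?n" "?n \<le> 2 ^ participations xs t e"
      using finds_min_participation_lower[of ?n t] n by auto
    then show "\<exists>xs. length xs = ?n \<and> distinct xs \<and> inversions xs \<le> k \<and>
        (\<exists>e < ?n. real (participations xs t e) \<ge> 1/4 * logm (real k))"
      using inversions_le participations_ge by blast
  qed (use n in simp)
qed

theorem theorem8:
  shows "(\<exists>A :: nat \<Rightarrow> ctree. \<exists>c > 0.
            (\<forall>n \<ge> 1. finds_min n (A n)) \<and>
            (\<forall>xs. xs \<noteq> [] \<and> distinct xs \<longrightarrow>
               (\<forall>e < length xs. real (participations xs (A (length xs)) e)
                                   \<le> c * logm (real (inversions xs)))))
       \<and> (\<exists>c > 0. \<forall>k :: nat. \<exists>n \<ge> 1. \<forall>t. finds_min n t \<longrightarrow>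
            (\<exists>xs. length xs = n \<and> distinct xs \<and> inversions xs \<le> k \<and>
               (\<exists>e < n. real (participations xs t e) \<ge> c * logm (real k))))"
proof
  show "\<exists>A :: nat \<Rightarrow> ctree. \<exists>c > 0.
          (\<forall>n \<ge> 1. finds_min n (A n)) \<and>
          (\<forall>xs. xs \<noteq> [] \<and> distinct xs \<longrightarrow>
             (\<forall>e < length xs. real (participations xs (A (length xs)) e)
                                 \<le> c * logm (real (inversions xs))))"
    using finds_min_min_finder participations_min_finder_le
    by (intro exI[of _ min_finder] exI[of _ "5 :: real"]) auto
  show "\<exists>c > 0. \<forall>k :: nat. \<exists>n \<ge> 1. \<forall>t. finds_min n t \<longrightarrow>
          (\<exists>xs. length xs = n \<and> distinct xs \<and> inversions xs \<le> k \<and>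
             (\<exists>e < n. real (participations xs t e) \<ge> c * logm (real k)))"
    using min_finding_participation_lower_bound by (intro exI[of _ "1/4 :: real"]) auto
qed

end
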